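(* Let $Z$ be a separable scattered Tychonoff space whose scattered height $ht(Z)$ equals $2$. Then $Z$ is a $\Delta$-space.
   Context: A space is scattered if every nonempty subset $A$ has a point isolated in $A$. For $A\subseteq X$, $A^{(1)}$ is the set of non-isolated points of $A$ (in the subspace $A$). Derivatives: $X^{(0)}=X$, $X^{(\alpha+1)}=(X^{(\alpha)})^{(1)}$, $X^{(\gamma)}=\bigcap_{\alpha<\gamma}X^{(\alpha)}$ for limit $\gamma$. The scattered height $ht(X)$ of a scattered space is the least ordinal $\alpha$ with $X^{(\alpha)}=\emptyset$. A topological space $X$ is a $\Delta$-space if for every decreasing sequence $\{D_n:n\in\omega\}$ of subsets of $X$ with $\bigcap_n D_n=\emptyset$ there is a decreasing sequence $\{V_n:n\in\omega\}$ of open subsets of $X$ with $D_n\subseteq V_n$ for all $n$ and $\bigcap_n V_n=\emptyset$. *)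

theory Defs
  imports "HOL-Analysis.Analysis"
begin

definition isolated_pt_in :: "'a topology \<Rightarrow> 'a set \<Rightarrow> 'a \<Rightarrow> bool" where
  "isolated_pt_in X A x \<longleftrightarrow> x \<in> A \<and> (\<exists>U. openin X U \<and> U \<inter> A = {x})"

definition scattered_space :: "'a topology \<Rightarrow> bool" where
  "scattered_space X \<longleftrightarrow>
     (\<forall>A. A \<subseteq> topspace X \<and> A \<noteq> {} \<longrightarrow> (\<exists>x. isolated_pt_in X A x))"

definition cb_derivative :: "'a topology \<Rightarrow> 'a set \<Rightarrow> 'a set" where
  "cb_derivative X A = {x \<in> A. \<not> isolated_pt_in X A x}"

definition cb_iter :: "'a topology \<Rightarrow> nat \<Rightarrow> 'a set" where
  "cb_iter X n = (cb_derivative X ^^ n) (topspace X)"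

definition scattered_height_eq :: "'a topology \<Rightarrow> nat \<Rightarrow> bool" where
  "scattered_height_eq X n \<longleftrightarrow> cb_iter X n = {} \<and> (\<forall>m<n. cb_iter X m \<noteq> {})"

definition Tychonoff_space :: "'a topology \<Rightarrow> bool" where
  "Tychonoff_space X \<longleftrightarrow> t1_space X \<and> completely_regular_space X"

definition Delta_space :: "'a topology \<Rightarrow> bool" where
  "Delta_space X \<longleftrightarrow>
     (\<forall>D :: nat \<Rightarrow> 'a set.
        (\<forall>n. D n \<subseteq> topspace X) \<and> decseq D \<and> (\<Inter>n. D n) = {} \<longrightarrow>
        (\<exists>V :: nat \<Rightarrow> 'a set. (\<forall>n. openin X (V n)) \<and> decseq V \<and>
              (\<forall>n. D n \<subseteq> V n) \<and> (\<Inter>n. V n) = {}))"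

end

theory Submission
  imports Defs
begin

text \<open>
  A space of height 2 splits into the open set I of isolated points and the derived set L,
  which is discrete in itself. Separability makes I countable, so in a T1 space I is the
  union of an increasing sequence of finite, hence closed, sets F n. Given D n decreasing
  with empty intersection, cover D n by its points in I together with neighbourhoods
  U x - F n of its points x in L, where U x isolates x in L. A point lying in all these
  open sets is in D n for every n: if it is in L, then U x meets L only in x; if it is in I,
  it eventually lies in F n and so cannot come from the second part.
\<close>

lemma openin_singleton_if_isolated:
  assumes "isolated_pt_in X (topspace X) x"
  shows "openin X {x}"
proof -
  obtain W where W: "openin X W" "W \<inter> topspace X = {x}"
    using assms by (auto simp: isolated_pt_in_def)
  then have "W = {x}" using openin_subset by blast
  with W(1) show ?thesis by simp
qed

lemma isolated_pt_in_dense_subset: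
  assumes "X closure_of C = topspace X" and "isolated_pt_in X (topspace X) x"
  shows "x \<in> C"
proof -
  have "x \<in> X closure_of C" using assms by (simp add: isolated_pt_in_def)
  then show ?thesis
    using openin_singleton_if_isolated[OF assms(2)] unfolding in_closure_of by blast
qed

lemma separable_space_countable_isolated_points:
  assumes "separable_space X"
  shows "countable {x. isolated_pt_in X (topspace X) x}"
proof -
  obtain C where "countable C" "X closure_of C = topspace X"
    using assms by (auto simp: separable_space_def)
  then show ?thesis
    using isolated_pt_in_dense_subset countable_subset by (metis mem_Collect_eq subsetI)
qed

lemma t1_space_countable_Union_incseq_closedin:
  assumes "t1_space X" "countable S" "S \<subseteq> topspace X"
  obtains F where "incseq F" "\<And>n. closedin X (F n)" "(\<Union>n. F n) = S"
proof -
  define F where "F n = S \<inter> from_nat_into S ` {..<n}" for n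
  have "incseq F" by (auto simp: F_def incseq_def)
  moreover have "closedin X (F n)" for n
  proof -
    have "finite (F n)" "F n \<subseteq> topspace X" using assms(3) by (auto simp: F_def)
    then show ?thesis using assms(1) t1_space_closedin_finite by blast
  qed
  moreover have "S \<subseteq> (\<Union>n. F n)"
  proof
    fix y assume "y \<in> S"
    then obtain k where "y = from_nat_into S k"
      using range_from_nat_into[OF _ assms(2)] by blast
    with \<open>y \<in> S\<close> show "y \<in> (\<Union>n. F n)" by (auto simp: F_def)
  qed
  moreover have "(\<Union>n. F n) \<subseteq> S" by (auto simp: F_def)
  ultimately show thesis using that by blast
qed

lemma derived_set_discrete_if_height_2:
  assumes "scattered_height_eq X 2" and "x \<in> cb_derivative X (topspace X)"
  shows "isolated_pt_in X (cb_derivative X (topspace X)) x"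
proof -
  have "cb_derivative X (cb_derivative X (topspace X)) = {}"
    using assms(1) by (simp add: scattered_height_eq_def cb_iter_def numeral_2_eq_2)
  with assms(2) show ?thesis by (auto simp: cb_derivative_def)
qed

lemma Delta_space_if_open_points_Fsigma_and_rest_discrete:
  assumes open_points: "\<And>y. y \<in> I \<Longrightarrow> openin X {y}"
    and discrete: "\<And>x. x \<in> L \<Longrightarrow> isolated_pt_in X L x"
    and cover: "topspace X = I \<union> L"
    and F: "incseq F" "\<And>n. closedin X (F n)" "(\<Union>n. F n) = I"
  shows "Delta_space X"
  unfolding Delta_space_def
proof (intro allI impI)
  fix D :: "nat \<Rightarrow> 'a set"
  assume D: "(\<forall>n. D n \<subseteq> topspace X) \<and> decseq D \<and> (\<Inter>n. D n) = {}"
  obtain U where U: "\<And>x. x \<in> L \<Longrightarrow> openin X (U x) \<and> U x \<inter> L = {x}"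
    using discrete unfolding isolated_pt_in_def by metis
  define V where "V n = (D n \<inter> I) \<union> (\<Union>x\<in>L \<inter> D n. U x - F n)" for n
  have "openin X (V n)" for n
  proof -
    have "openin X (\<Union>y\<in>D n \<inter> I. {y})"
      using open_points by (intro openin_Union) auto
    moreover have "openin X (\<Union>x\<in>L \<inter> D n. U x - F n)"
      using U F(2) by (intro openin_Union) (auto intro: openin_diff)
    ultimately show ?thesis unfolding V_def by auto
  qed
  moreover have "decseq V"
    unfolding decseq_def
  proof (intro allI impI)
    fix m n :: nat assume "m \<le> n"
    then have "D n \<subseteq> D m" "F m \<subseteq> F n" using D F(1) by (auto simp: decseq_def incseq_def)
    then show "V n \<subseteq> V m" unfolding V_def by blast
  qed
  moreover have "D n \<subseteq> V n" for n
  proof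
    fix x assume x: "x \<in> D n"
    show "x \<in> V n"
    proof (cases "x \<in> I")
      case False
      then have "x \<in> L" "x \<notin> F n" using x D cover F(3) by auto
      with x U show ?thesis unfolding V_def by blast
    qed (use x in \<open>auto simp: V_def\<close>)
  qed
  moreover have "(\<Inter>n. V n) = {}"
  proof -
    have "y \<in> D n" if y: "\<And>n. y \<in> V n" for y n
    proof (cases "y \<in> I")
      case True
      then obtain k where "y \<in> F k" using F(3) by blast
      moreover have "F k \<subseteq> F (max n k)" using F(1) by (simp add: incseq_def)
      ultimately have "y \<in> F (max n k)" by blast
      then have "y \<in> D (max n k)" using y[of "max n k"] by (auto simp: V_def)
      moreover have "D (max n k) \<subseteq> D n" using D by (simp add: decseq_def)
      ultimately show ?thesis by blast
    next
      case False
      then obtain x where x: "x \<in> L \<inter> D n" "y \<in> U x" using y[of n] by (auto simp: V_def)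
      have "openin X (U x)" and Ux: "U x \<inter> L = {x}" using U x(1) by auto
      then have "y \<in> topspace X" using x(2) openin_subset by blast
      then have "y \<in> U x \<inter> L" using x(2) False cover by blast
      then show ?thesis using x(1) by (simp add: Ux)
    qed
    then have "(\<Inter>n. V n) \<subseteq> (\<Inter>n. D n)" by blast
    then show ?thesis using D by simp
  qed
  ultimately show "\<exists>V. (\<forall>n. openin X (V n)) \<and> decseq V \<and> (\<forall>n. D n \<subseteq> V n) \<and> (\<Inter>n. V n) = {}"
    by auto
qed

theorem corollary3p9:
  fixes Z :: "'a topology"
  assumes "separable_space Z"
    and "scattered_space Z"
    and "Tychonoff_space Z"
    and "scattered_height_eq Z 2"
  shows "Delta_space Z"
proof -
  define L where "L = cb_derivative Z (topspace Z)"
  define I where "I = topspace Z - L"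
  have isolated_I: "I = {x. isolated_pt_in Z (topspace Z) x}"
    by (auto simp: I_def L_def cb_derivative_def isolated_pt_in_def)
  have "countable I"
    using separable_space_countable_isolated_points[OF assms(1)] isolated_I by simp
  moreover have "t1_space Z" using assms(3) by (simp add: Tychonoff_space_def)
  ultimately obtain F where F: "incseq F" "\<And>n. closedin Z (F n)" "(\<Union>n. F n) = I"
    using t1_space_countable_Union_incseq_closedin I_def by blast
  have "openin Z {y}" if "y \<in> I" for y
    using that openin_singleton_if_isolated by (simp add: isolated_I)
  moreover have "isolated_pt_in Z L x" if "x \<in> L" for x
    using that derived_set_discrete_if_height_2[OF assms(4)] by (simp add: L_def)
  moreover have "topspace Z = I \<union> L" by (auto simp: I_def L_def cb_derivative_def)
  ultimately show ?thesis
    using F by (rule Delta_space_if_open_points_Fsigma_and_rest_discrete)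
qed

end
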